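(* Let $a>0$, $k_p,k_d>0$, $z_0=x_0+iy_0\in\mathbb{C}$, $N>\rho>0$, and let $A_{\rho,N}=\{(\ell_1,\ell_2)\in\mathbb{Z}^2:\rho a<|z_{\ell_1,\ell_2}|<Na\}$ where $z_{\ell_1,\ell_2}=(\ell_1a-x_0)+i(\ell_2a-y_0)$. With $\epsilon^{(i)},\epsilon^{(\pm)},\Delta^{(i)},\Delta^{d(i,\pm)},\Delta^{d(\pm)}$ as defined in the context, define for each $(\ell_1,\ell_2)$ $$F(\ell_1,\ell_2)=\tfrac12k_p\big((\Delta^{(1)})^2+(\Delta^{(2)})^2\big)+\tfrac12k_d\big((\Delta^{d(1,+)})^2+(\Delta^{d(2,+)})^2+(\Delta^{d(1,-)})^2+(\Delta^{d(2,-)})^2+(\Delta^{d(+)})^2+(\Delta^{d(-)})^2\big)$$ and the elastic energy $E_{\rho,N}(x_0,y_0)=\sum_{(\ell_1,\ell_2)\in A_{\rho,N}}F(\ell_1,\ell_2)$. Define the truncated Epstein–Hurwitz zeta value $$\zeta_{\rho,N}(2,-z_0/a)=\sum_{(\ell_1,\ell_2)\in A_{\rho,N}}\frac{1}{(\ell_1-x_0/a)^2+(\ell_2-y_0/a)^2}.$$ Then $$E_{\rho,N}(x_0,y_0)=\frac{1}{8\pi^2}k_da^2\,\zeta_{\rho,N}(2,-z_0/a)+\sum_{(\ell_1,\ell_2)\in A_{\rho,N}}r(\ell_1,\ell_2),$$ where $r(\ell_1,\ell_2)=F(\ell_1,\ell_2)-\frac{k_d}{8\pi^2}\frac{a^4}{|z_{\ell_1,\ell_2}|^2}$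 satisfies $r(\ell_1,\ell_2)\,|z_{\ell_1,\ell_2}|^2/a^2\to0$ as $|z_{\ell_1,\ell_2}|\to\infty$ (with $a,x_0,y_0,k_p,k_d$ fixed); i.e. up to terms of higher order in $a^2/|z_{\ell_1,\ell_2}|^2$ the energy equals $\frac{1}{8\pi^2}k_da^2\zeta_{\rho,N}(2,-z_0/a)$.
   Context: Notation for a single screw dislocation in the simple cubic lattice with spacing $a$: $s(\ell_1,\ell_2)=z_{\ell_1,\ell_2}/|z_{\ell_1,\ell_2}|$; $\epsilon^{(1)}=\frac{a}{2\pi}\operatorname{Arg}\frac{s(\ell_1+1,\ell_2)}{s(\ell_1,\ell_2)}$, $\epsilon^{(2)}=\frac{a}{2\pi}\operatorname{Arg}\frac{s(\ell_1,\ell_2+1)}{s(\ell_1,\ell_2)}$, $\epsilon^{(\pm)}=\frac{a}{2\pi}\operatorname{Arg}\frac{s(\ell_1+1,\ell_2\pm1)}{s(\ell_1,\ell_2)}$ with $\operatorname{Arg}$ the principal argument in $(-\pi,\pi]$; for $i=1,2$: $\Delta^{(i)}=\sqrt{a^2+(\epsilon^{(i)})^2}-a$, $\Delta^{d(i,\pm)}=\sqrt{(a\pm\epsilon^{(i)})^2+a^2}-\sqrt2a$, $\Delta^{d(\pm)}=\sqrt{2a^2+(\epsilon^{(\pm)})^2}-\sqrt2a$ (all evaluated at $(\ell_1,\ell_2)$). $k_p$ and $k_d$ are the spring constants of the axis-parallel and diagonal springs respectively; the vertical springs have zero length change. *)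

theory Defs
  imports Complex_Main
begin

text \<open>Lattice positions relative to the dislocation core z0 = x0 + i y0.\<close>
definition zl :: "real \<Rightarrow> real \<Rightarrow> real \<Rightarrow> int \<Rightarrow> int \<Rightarrow> complex" where
  "zl a x0 y0 l1 l2 = Complex (of_int l1 * a - x0) (of_int l2 * a - y0)"

definition sl :: "real \<Rightarrow> real \<Rightarrow> real \<Rightarrow> int \<Rightarrow> int \<Rightarrow> complex" where
  "sl a x0 y0 l1 l2 = zl a x0 y0 l1 l2 / complex_of_real (cmod (zl a x0 y0 l1 l2))"

definition eps1 :: "real \<Rightarrow> real \<Rightarrow> real \<Rightarrow> int \<Rightarrow> int \<Rightarrow> real" where
  "eps1 a x0 y0 l1 l2 = a / (2 * pi) * Arg (sl a x0 y0 (l1 + 1) l2 / sl a x0 y0 l1 l2)"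

definition eps2 :: "real \<Rightarrow> real \<Rightarrow> real \<Rightarrow> int \<Rightarrow> int \<Rightarrow> real" where
  "eps2 a x0 y0 l1 l2 = a / (2 * pi) * Arg (sl a x0 y0 l1 (l2 + 1) / sl a x0 y0 l1 l2)"

definition epsp :: "real \<Rightarrow> real \<Rightarrow> real \<Rightarrow> int \<Rightarrow> int \<Rightarrow> real" where
  "epsp a x0 y0 l1 l2 = a / (2 * pi) * Arg (sl a x0 y0 (l1 + 1) (l2 + 1) / sl a x0 y0 l1 l2)"

definition epsm :: "real \<Rightarrow> real \<Rightarrow> real \<Rightarrow> int \<Rightarrow> int \<Rightarrow> real" where
  "epsm a x0 y0 l1 l2 = a / (2 * pi) * Arg (sl a x0 y0 (l1 + 1) (l2 - 1) / sl a x0 y0 l1 l2)"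

definition Dax :: "real \<Rightarrow> real \<Rightarrow> real" where
  "Dax a e = sqrt (a\<^sup>2 + e\<^sup>2) - a"

definition Ddi_p :: "real \<Rightarrow> real \<Rightarrow> real" where
  "Ddi_p a e = sqrt ((a + e)\<^sup>2 + a\<^sup>2) - sqrt 2 * a"

definition Ddi_m :: "real \<Rightarrow> real \<Rightarrow> real" where
  "Ddi_m a e = sqrt ((a - e)\<^sup>2 + a\<^sup>2) - sqrt 2 * a"

definition Dd :: "real \<Rightarrow> real \<Rightarrow> real" where
  "Dd a e = sqrt (2 * a\<^sup>2 + e\<^sup>2) - sqrt 2 * a"

definition Fenergy :: "real \<Rightarrow> real \<Rightarrow> real \<Rightarrow> real \<Rightarrow> real \<Rightarrow> int \<Rightarrow> int \<Rightarrow> real" where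
  "Fenergy kp kd a x0 y0 l1 l2 =
     (let e1 = eps1 a x0 y0 l1 l2; e2 = eps2 a x0 y0 l1 l2;
          ep = epsp a x0 y0 l1 l2; em = epsm a x0 y0 l1 l2 in
      1/2 * kp * ((Dax a e1)\<^sup>2 + (Dax a e2)\<^sup>2)
      + 1/2 * kd * ((Ddi_p a e1)\<^sup>2 + (Ddi_p a e2)\<^sup>2 + (Ddi_m a e1)\<^sup>2 + (Ddi_m a e2)\<^sup>2
                    + (Dd a ep)\<^sup>2 + (Dd a em)\<^sup>2))"

definition annulus :: "real \<Rightarrow> real \<Rightarrow> real \<Rightarrow> real \<Rightarrow> real \<Rightarrow> (int \<times> int) set" where
  "annulus a x0 y0 \<rho> N = {(l1, l2). \<rho> * a < cmod (zl a x0 y0 l1 l2) \<and> cmod (zl a x0 y0 l1 l2) < N * a}"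

definition energy :: "real \<Rightarrow> real \<Rightarrow> real \<Rightarrow> real \<Rightarrow> real \<Rightarrow> real \<Rightarrow> real \<Rightarrow> real" where
  "energy kp kd a x0 y0 \<rho> N = (\<Sum>(l1, l2)\<in>annulus a x0 y0 \<rho> N. Fenergy kp kd a x0 y0 l1 l2)"

definition zeta_trunc :: "real \<Rightarrow> real \<Rightarrow> real \<Rightarrow> real \<Rightarrow> real \<Rightarrow> real" where
  "zeta_trunc a x0 y0 \<rho> N = (\<Sum>(l1, l2)\<in>annulus a x0 y0 \<rho> N.
      1 / ((of_int l1 - x0 / a)\<^sup>2 + (of_int l2 - y0 / a)\<^sup>2))"

definition rem :: "real \<Rightarrow> real \<Rightarrow> real \<Rightarrow> real \<Rightarrow> real \<Rightarrow> int \<Rightarrow> int \<Rightarrow> real" where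
  "rem kp kd a x0 y0 l1 l2 = Fenergy kp kd a x0 y0 l1 l2
      - kd / (8 * pi\<^sup>2) * a ^ 4 / (cmod (zl a x0 y0 l1 l2))\<^sup>2"

end

theory Submission
  imports Defs "HOL-Analysis.Complex_Transcendental"
begin

(* Put w = a / z.  The strain towards the neighbour at offset c a (c = 1, i, 1 + i, 1 - i) is
   (a / 2 pi) Arg (1 + c w) = (a / 2 pi) (Im (c w) + O(|w|^2)).  The axis-parallel springs and the
   (+/-) diagonals change length only to second order in the strain and contribute O(a^2 |w|^4);
   the (i,+/-) diagonals change by +/- eps/sqrt 2 + O(eps^2 / a), so their squared changes add up to
   eps_i^2 + O(a^2 |w|^3).  Finally eps_1^2 + eps_2^2 = (a / 2 pi)^2 ((Im w)^2 + (Re w)^2) + O(a^2 |w|^3),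
   whose main part a^4 / (4 pi^2 |z|^2) is the zeta term.  Hence r = O(a^2 |w|^3) uniformly for
   |z| >= 4a, i.e. r |z|^2 / a^2 = O(a / |z|). *)

lemma sqrt_sq_add_sub_eq:
  fixes A x :: real
  assumes "0 < A" "0 \<le> A\<^sup>2 + x"
  shows "sqrt (A\<^sup>2 + x) - A = x / (2 * A) - (sqrt (A\<^sup>2 + x) - A)\<^sup>2 / (2 * A)"
proof -
  have "(sqrt (A\<^sup>2 + x))\<^sup>2 = A\<^sup>2 + x" using assms(2) by simp
  then show ?thesis using assms(1) by (simp add: field_simps power2_eq_square)
qed

lemma abs_sqrt_sq_add_sub_le:
  fixes A x :: real
  assumes "0 < A" "0 \<le> A\<^sup>2 + x"
  shows "\<bar>sqrt (A\<^sup>2 + x) - A\<bar> \<le> \<bar>x\<bar> / A"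
proof -
  define S where "S = sqrt (A\<^sup>2 + x)"
  have "S\<^sup>2 = A\<^sup>2 + x" unfolding S_def using assms(2) by (rule real_sqrt_pow2)
  then have "(S - A) * (S + A) = x" by (simp add: algebra_simps power2_eq_square)
  moreover have "A \<le> S + A" unfolding S_def using assms(2) by simp
  ultimately have "\<bar>S - A\<bar> * A \<le> \<bar>x\<bar>"
    by (metis abs_ge_zero abs_mult abs_of_pos assms(1) less_le_trans mult_left_mono)
  then show ?thesis unfolding S_def using assms(1) by (simp add: pos_le_divide_eq)
qed

lemma abs_sqrt_sq_add_taylor_le:
  fixes A x :: real
  assumes "0 < A" "0 \<le> A\<^sup>2 + x"
  shows "\<bar>sqrt (A\<^sup>2 + x) - A - x / (2 * A)\<bar> \<le> x\<^sup>2 / (2 * A ^ 3)"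
proof -
  have "(sqrt (A\<^sup>2 + x) - A)\<^sup>2 \<le> (\<bar>x\<bar> / A)\<^sup>2"
    using abs_sqrt_sq_add_sub_le[OF assms] by (metis abs_ge_zero power2_abs power_mono)
  then have "(sqrt (A\<^sup>2 + x) - A)\<^sup>2 / (2 * A) \<le> (\<bar>x\<bar> / A)\<^sup>2 / (2 * A)"
    using assms(1) by (simp add: divide_right_mono)
  also have "\<dots> = x\<^sup>2 / (2 * A ^ 3)" by (simp add: power_divide power3_eq_cube power2_eq_square)
  moreover have "0 \<le> (sqrt (A\<^sup>2 + x) - A)\<^sup>2 / (2 * A)" using assms(1) by simp
  ultimately show ?thesis using sqrt_sq_add_sub_eq[OF assms] by linarith
qed

lemma sqrt_sq_add_sub_le:
  fixes A x :: real
  assumes "0 < A" "0 \<le> x"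
  shows "\<bar>sqrt (A\<^sup>2 + x) - A\<bar> \<le> x / (2 * A)"
proof -
  have "A \<le> sqrt (A\<^sup>2 + x)" using assms by (simp add: real_le_rsqrt)
  moreover have "0 \<le> (sqrt (A\<^sup>2 + x) - A)\<^sup>2 / (2 * A)" using assms(1) by simp
  moreover have "sqrt (A\<^sup>2 + x) - A = x / (2 * A) - (sqrt (A\<^sup>2 + x) - A)\<^sup>2 / (2 * A)"
    using assms by (intro sqrt_sq_add_sub_eq) auto
  ultimately show ?thesis by linarith
qed

lemma abs_Dax_le: "0 < a \<Longrightarrow> \<bar>Dax a e\<bar> \<le> e\<^sup>2 / (2 * a)"
  unfolding Dax_def by (rule sqrt_sq_add_sub_le) auto

lemma abs_Dd_le:
  assumes "0 < a"
  shows "\<bar>Dd a e\<bar> \<le> e\<^sup>2 / (2 * a)"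
proof -
  have "Dd a e = sqrt ((sqrt 2 * a)\<^sup>2 + e\<^sup>2) - sqrt 2 * a"
    unfolding Dd_def by (simp add: power_mult_distrib)
  also have "\<bar>\<dots>\<bar> \<le> e\<^sup>2 / (2 * (sqrt 2 * a))"
    using assms by (intro sqrt_sq_add_sub_le) auto
  also have "\<dots> \<le> e\<^sup>2 / (2 * a)"
    using assms by (intro divide_left_mono) auto
  finally show ?thesis .
qed

lemma Ddi_p_radicand_eq: "(sqrt 2 * a)\<^sup>2 + (2 * a * e + e\<^sup>2) = (a + e)\<^sup>2 + a\<^sup>2"
  by (simp add: power_mult_distrib power2_eq_square algebra_simps)

lemma Ddi_p_eq_sqrt_sub: "Ddi_p a e = sqrt ((sqrt 2 * a)\<^sup>2 + (2 * a * e + e\<^sup>2)) - sqrt 2 * a"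
  unfolding Ddi_p_def Ddi_p_radicand_eq ..

lemma abs_two_mult_add_sq_le:
  fixes a e :: real
  assumes "0 < a" "\<bar>e\<bar> \<le> a"
  shows "\<bar>2 * a * e + e\<^sup>2\<bar> \<le> 3 * a * \<bar>e\<bar>"
proof -
  have "\<bar>e\<bar> * \<bar>e\<bar> \<le> a * \<bar>e\<bar>" using assms(2) by (rule mult_right_mono) simp
  then have "e\<^sup>2 \<le> a * \<bar>e\<bar>" by (simp add: power2_eq_square)
  moreover have "\<bar>2 * a * e\<bar> = 2 * a * \<bar>e\<bar>" using assms(1) by (simp add: abs_mult)
  ultimately show ?thesis using abs_triangle_ineq[of "2 * a * e" "e\<^sup>2"] by simp
qed

lemma abs_Ddi_p_le:
  assumes "0 < a" "\<bar>e\<bar> \<le> a"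
  shows "\<bar>Ddi_p a e\<bar> \<le> 3 * \<bar>e\<bar>"
proof -
  have "\<bar>Ddi_p a e\<bar> \<le> \<bar>2 * a * e + e\<^sup>2\<bar> / (sqrt 2 * a)"
    unfolding Ddi_p_eq_sqrt_sub using assms(1)
    by (intro abs_sqrt_sq_add_sub_le) (simp_all add: Ddi_p_radicand_eq)
  also have "\<dots> \<le> 3 * a * \<bar>e\<bar> / a"
    using abs_two_mult_add_sq_le[OF assms] assms(1) by (intro frac_le) auto
  finally show ?thesis using assms(1) by simp
qed

lemma abs_Ddi_p_sub_linear_le:
  assumes "0 < a" "\<bar>e\<bar> \<le> a"
  shows "\<bar>Ddi_p a e - e / sqrt 2\<bar> \<le> 5 * e\<^sup>2 / a"
proof -
  define A where "A = sqrt 2 * a"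
  define x where "x = 2 * a * e + e\<^sup>2"
  have A_ge: "a \<le> A" and A_pos: "0 < A" unfolding A_def using assms(1) by auto
  have rad_nonneg: "0 \<le> A\<^sup>2 + x" unfolding A_def x_def Ddi_p_radicand_eq by simp
  have "x / (2 * A) - e / sqrt 2 = e\<^sup>2 / (2 * A)"
    unfolding x_def A_def using assms(1) by (simp add: field_simps)
  then have "Ddi_p a e - e / sqrt 2 = (sqrt (A\<^sup>2 + x) - A - x / (2 * A)) + e\<^sup>2 / (2 * A)"
    unfolding Ddi_p_eq_sqrt_sub A_def[symmetric] x_def[symmetric] by simp
  moreover have "x\<^sup>2 / (2 * A ^ 3) \<le> (3 * a * \<bar>e\<bar>)\<^sup>2 / (2 * a ^ 3)"
  proof (rule frac_le)
    show "x\<^sup>2 \<le> (3 * a * \<bar>e\<bar>)\<^sup>2"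
      using abs_two_mult_add_sq_le[OF assms] unfolding x_def by (metis abs_ge_zero power2_abs power_mono)
    show "2 * a ^ 3 \<le> 2 * A ^ 3" using A_ge assms(1) by (simp add: power_mono)
  qed (use assms(1) in auto)
  moreover have "e\<^sup>2 / (2 * A) \<le> e\<^sup>2 / (2 * a)"
    using A_ge assms(1) by (intro divide_left_mono) auto
  moreover have "0 \<le> e\<^sup>2 / (2 * A)" using A_pos by simp
  ultimately have "\<bar>Ddi_p a e - e / sqrt 2\<bar> \<le> (3 * a * \<bar>e\<bar>)\<^sup>2 / (2 * a ^ 3) + e\<^sup>2 / (2 * a)"
    using abs_sqrt_sq_add_taylor_le[OF A_pos rad_nonneg] unfolding abs_le_iff by linarith
  also have "\<dots> = 5 * e\<^sup>2 / a"
    using assms(1) by (simp add: power2_eq_square power3_eq_cube field_simps)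
  finally show ?thesis .
qed

lemma Ddi_p_sq_approx:
  assumes "0 < a" "\<bar>e\<bar> \<le> a"
  shows "\<bar>(Ddi_p a e)\<^sup>2 - e\<^sup>2 / 2\<bar> \<le> 20 * \<bar>e\<bar> ^ 3 / a"
proof -
  have "\<bar>e / sqrt 2\<bar> \<le> \<bar>e\<bar>" by (simp add: abs_divide divide_le_eq mult_le_cancel_left1)
  then have sum_le: "\<bar>Ddi_p a e + e / sqrt 2\<bar> \<le> 4 * \<bar>e\<bar>"
    using abs_Ddi_p_le[OF assms] by linarith
  have "(Ddi_p a e)\<^sup>2 - e\<^sup>2 / 2 = (Ddi_p a e - e / sqrt 2) * (Ddi_p a e + e / sqrt 2)"
    by (simp add: power2_eq_square algebra_simps)
  then have "\<bar>(Ddi_p a e)\<^sup>2 - e\<^sup>2 / 2\<bar> = \<bar>Ddi_p a e - e / sqrt 2\<bar> * \<bar>Ddi_p a e + e / sqrt 2\<bar>"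
    by (simp add: abs_mult)
  also have "\<dots> \<le> 5 * e\<^sup>2 / a * (4 * \<bar>e\<bar>)"
    using assms(1) by (intro mult_mono abs_Ddi_p_sub_linear_le[OF assms] sum_le) auto
  also have "\<dots> = 20 * \<bar>e\<bar> ^ 3 / a" by (simp add: power2_eq_square power3_eq_cube)
  finally show ?thesis .
qed

lemma Ddi_m_eq_Ddi_p_uminus: "Ddi_m a e = Ddi_p a (- e)"
  unfolding Ddi_m_def Ddi_p_def by simp

lemma Ddi_sq_sum_approx:
  assumes "0 < a" "\<bar>e\<bar> \<le> a"
  shows "\<bar>(Ddi_p a e)\<^sup>2 + (Ddi_m a e)\<^sup>2 - e\<^sup>2\<bar> \<le> 40 * \<bar>e\<bar> ^ 3 / a"
  using Ddi_p_sq_approx[OF assms] Ddi_p_sq_approx[of a "- e"] assms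
  unfolding Ddi_m_eq_Ddi_p_uminus by simp

lemma spring_terms_le:
  assumes "0 < a" "0 \<le> h" "h \<le> 1" "\<bar>e\<bar> \<le> a * h"
  shows "(Dax a e)\<^sup>2 \<le> a\<^sup>2 * h ^ 3 / 4" "(Dd a e)\<^sup>2 \<le> a\<^sup>2 * h ^ 3 / 4"
    "\<bar>(Ddi_p a e)\<^sup>2 + (Ddi_m a e)\<^sup>2 - e\<^sup>2\<bar> \<le> 40 * a\<^sup>2 * h ^ 3"
proof -
  have h43: "h ^ 4 \<le> h ^ 3" using assms(2,3) by (simp add: power_decreasing)
  have "e\<^sup>2 \<le> (a * h)\<^sup>2"
    using assms by (metis abs_ge_zero power2_abs power_mono)
  then have quad: "e\<^sup>2 / (2 * a) \<le> a * h\<^sup>2 / 2"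
    using assms(1) by (simp add: power2_eq_square field_simps)
  have sq_le: "D\<^sup>2 \<le> a\<^sup>2 * h ^ 3 / 4" if "\<bar>D\<bar> \<le> e\<^sup>2 / (2 * a)" for D
  proof -
    have "D\<^sup>2 \<le> (a * h\<^sup>2 / 2)\<^sup>2"
      using that quad by (metis abs_ge_zero order_trans power2_abs power_mono)
    also have "\<dots> = a\<^sup>2 * h ^ 4 / 4" by (simp add: power2_eq_square power4_eq_xxxx)
    also have "\<dots> \<le> a\<^sup>2 * h ^ 3 / 4" using h43 by (simp add: mult_left_mono)
    finally show ?thesis .
  qed
  show "(Dax a e)\<^sup>2 \<le> a\<^sup>2 * h ^ 3 / 4" by (rule sq_le[OF abs_Dax_le[OF assms(1)]])
  show "(Dd a e)\<^sup>2 \<le> a\<^sup>2 * h ^ 3 / 4" by (rule sq_le[OF abs_Dd_le[OF assms(1)]])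
  have "a * h \<le> a" using assms(1,3) by (simp add: mult_left_le)
  then have "\<bar>e\<bar> \<le> a" using assms(4) by linarith
  then have "\<bar>(Ddi_p a e)\<^sup>2 + (Ddi_m a e)\<^sup>2 - e\<^sup>2\<bar> \<le> 40 * \<bar>e\<bar> ^ 3 / a"
    by (rule Ddi_sq_sum_approx[OF assms(1)])
  also have "\<dots> \<le> 40 * (a * h) ^ 3 / a"
    using assms by (intro divide_right_mono mult_left_mono power_mono) auto
  also have "\<dots> = 40 * a\<^sup>2 * h ^ 3" using assms(1) by (simp add: power2_eq_square power3_eq_cube)
  finally show "\<bar>(Ddi_p a e)\<^sup>2 + (Ddi_m a e)\<^sup>2 - e\<^sup>2\<bar> \<le> 40 * a\<^sup>2 * h ^ 3" .
qed

lemma Arg_1_plus_approx: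
  fixes v :: complex
  assumes "norm v \<le> 1/2"
  shows "\<bar>Arg (1 + v) - Im v\<bar> \<le> 2 * (norm v)\<^sup>2"
proof -
  have "1 + v \<noteq> 0"
  proof
    assume "1 + v = 0"
    then have "v = -1" by (metis add.commute add_eq_0_iff)
    with assms show False by simp
  qed
  then have "\<bar>Arg (1 + v) - Im v\<bar> = \<bar>Im (Ln (1 + v) - v)\<bar>" by (simp add: Arg_eq_Im_Ln)
  also have "\<dots> \<le> norm (Ln (1 + v) - v)" by (rule abs_Im_le_cmod)
  also have "\<dots> \<le> (norm v)\<^sup>2 / (1 - norm v)" using Ln_approx_linear[of v] assms by simp
  also have "\<dots> \<le> (norm v)\<^sup>2 / (1/2)"
    using assms by (intro divide_left_mono) auto
  finally show ?thesis by simp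
qed

lemma abs_Arg_1_plus_le:
  fixes v :: complex
  assumes "norm v \<le> 1/2"
  shows "\<bar>Arg (1 + v)\<bar> \<le> 2 * norm v"
proof -
  have "norm v * (2 * norm v) \<le> norm v * 1" using assms by (intro mult_left_mono) auto
  then have "2 * (norm v)\<^sup>2 \<le> norm v" by (simp add: power2_eq_square)
  then show ?thesis using Arg_1_plus_approx[OF assms] abs_Im_le_cmod[of v] by linarith
qed

lemma Arg_normalized_quotient:
  fixes z c :: complex
  assumes "z \<noteq> 0" "z + c \<noteq> 0"
  shows "Arg ((z + c) / of_real (cmod (z + c)) / (z / of_real (cmod z))) = Arg (1 + c / z)"
proof -
  have "(z + c) / of_real (cmod (z + c)) / (z / of_real (cmod z))
      = of_real (cmod z / cmod (z + c)) * (1 + c / z)"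
    using assms by (simp add: field_simps)
  then show ?thesis using assms by simp
qed

lemma abs_Arg_scaled_le:
  fixes v :: complex and a h :: real
  assumes "0 \<le> a" "norm v \<le> 2 * h" "h \<le> 1/4"
  shows "\<bar>a / (2 * pi) * Arg (1 + v)\<bar> \<le> a * h"
proof -
  have "\<bar>Arg (1 + v)\<bar> \<le> 4 * h" using abs_Arg_1_plus_le[of v] assms(2,3) by simp
  moreover have "\<bar>a / (2 * pi) * Arg (1 + v)\<bar> = a / (2 * pi) * \<bar>Arg (1 + v)\<bar>"
    using assms(1) by (simp add: abs_mult)
  moreover have "a / (2 * pi) * \<bar>Arg (1 + v)\<bar> \<le> a / (2 * pi) * (4 * h)"
    using assms(1) \<open>\<bar>Arg (1 + v)\<bar> \<le> 4 * h\<close> by (intro mult_left_mono) auto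
  ultimately have "\<bar>a / (2 * pi) * Arg (1 + v)\<bar> \<le> a / (2 * pi) * (4 * h)" by simp
  also have "\<dots> \<le> a * h"
  proof -
    have "0 \<le> h" using assms(2) norm_ge_zero[of v] by linarith
    with assms(1) have "0 \<le> a * h" by simp
    then have "2 * (a * h) \<le> pi * (a * h)" using pi_gt3 by (intro mult_right_mono) auto
    then show ?thesis by (simp add: field_simps)
  qed
  finally show ?thesis .
qed

lemma sum_sq_perturbation_le:
  fixes p q d1 d2 h :: real
  assumes "p\<^sup>2 + q\<^sup>2 = h\<^sup>2" "\<bar>d1\<bar> \<le> 2 * h\<^sup>2" "\<bar>d2\<bar> \<le> 2 * h\<^sup>2" "0 \<le> h" "h \<le> 1"
  shows "\<bar>(p + d1)\<^sup>2 + (q + d2)\<^sup>2 - h\<^sup>2\<bar> \<le> 16 * h ^ 3"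
proof -
  have cross: "\<bar>2 * u * d\<bar> \<le> 4 * h ^ 3" if "u\<^sup>2 \<le> h\<^sup>2" "\<bar>d\<bar> \<le> 2 * h\<^sup>2" for u d :: real
  proof -
    have "\<bar>u\<bar> \<le> h" using that(1) assms(4) by (metis power2_abs power2_le_imp_le)
    then have "\<bar>u\<bar> * \<bar>d\<bar> \<le> h * (2 * h\<^sup>2)" using that(2) assms(4) by (intro mult_mono) auto
    then show ?thesis by (simp add: abs_mult power2_eq_square power3_eq_cube mult.commute mult.left_commute)
  qed
  have sq: "d\<^sup>2 \<le> 4 * h ^ 3" if "\<bar>d\<bar> \<le> 2 * h\<^sup>2" for d :: real
  proof -
    have "d\<^sup>2 \<le> (2 * h\<^sup>2)\<^sup>2" using that by (metis abs_ge_zero power2_abs power_mono)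
    also have "\<dots> = 4 * h ^ 4" by (simp add: power2_eq_square power4_eq_xxxx)
    also have "\<dots> \<le> 4 * h ^ 3" using assms(4,5) by (simp add: power_decreasing)
    finally show ?thesis .
  qed
  have "p\<^sup>2 \<le> h\<^sup>2" "q\<^sup>2 \<le> h\<^sup>2" using assms(1) zero_le_power2[of p] zero_le_power2[of q] by linarith+
  note bounds = cross[OF this(1) assms(2)] cross[OF this(2) assms(3)] sq[OF assms(2)] sq[OF assms(3)]
  moreover have "(p + d1)\<^sup>2 + (q + d2)\<^sup>2 - h\<^sup>2 = 2 * p * d1 + d1\<^sup>2 + 2 * q * d2 + d2\<^sup>2"
    unfolding assms(1)[symmetric] by (simp add: power2_eq_square algebra_simps)
  ultimately show ?thesis using zero_le_power2[of d1] zero_le_power2[of d2] unfolding abs_le_iff by linarith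
qed

lemma zl_add:
  "zl a x0 y0 (l1 + m1) (l2 + m2) = zl a x0 y0 l1 l2 + of_real a * Complex (of_int m1) (of_int m2)"
  by (simp add: zl_def complex_eq_iff algebra_simps)

lemma Arg_sl_neighbour:
  assumes "0 < a" "4 * a \<le> cmod (zl a x0 y0 l1 l2)" "cmod (Complex (of_int m1) (of_int m2)) \<le> 2"
  shows "Arg (sl a x0 y0 (l1 + m1) (l2 + m2) / sl a x0 y0 l1 l2)
       = Arg (1 + Complex (of_int m1) (of_int m2) * (of_real a / zl a x0 y0 l1 l2))"
proof -
  define z where "z = zl a x0 y0 l1 l2"
  define c where "c = of_real a * Complex (of_int m1) (of_int m2)"
  have "cmod c \<le> 2 * a" unfolding c_def using assms(1,3) by (simp add: norm_mult)
  then have "2 * a \<le> cmod (z + c)"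
    using norm_diff_ineq[of z c] assms(2) unfolding z_def by linarith
  then have "z \<noteq> 0" and "z + c \<noteq> 0" using assms(1,2) unfolding z_def by auto
  then have "Arg (sl a x0 y0 (l1 + m1) (l2 + m2) / sl a x0 y0 l1 l2) = Arg (1 + c / z)"
    unfolding sl_def zl_add z_def[symmetric] c_def[symmetric] by (rule Arg_normalized_quotient)
  then show ?thesis unfolding c_def z_def by (simp add: mult.commute)
qed

lemma cmod_1_plus_minus_ii_le: "cmod (1 + \<i>) \<le> 2" "cmod (1 - \<i>) \<le> 2"
  using norm_triangle_ineq[of 1 \<i>] norm_triangle_ineq4[of 1 \<i>] by simp_all

lemma zl_scale_bounds:
  assumes "0 < a" "4 * a \<le> cmod (zl a x0 y0 l1 l2)"
  shows "0 < cmod (zl a x0 y0 l1 l2)" "0 \<le> a / cmod (zl a x0 y0 l1 l2)"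
    "a / cmod (zl a x0 y0 l1 l2) \<le> 1/4"
proof -
  show pos: "0 < cmod (zl a x0 y0 l1 l2)" using assms by linarith
  show "0 \<le> a / cmod (zl a x0 y0 l1 l2)" using assms(1) pos by simp
  show "a / cmod (zl a x0 y0 l1 l2) \<le> 1/4" using assms pos by (simp add: divide_le_eq)
qed

lemma strains_eq_Arg:
  assumes "0 < a" "4 * a \<le> cmod (zl a x0 y0 l1 l2)"
  defines "w \<equiv> of_real a / zl a x0 y0 l1 l2"
  shows "eps1 a x0 y0 l1 l2 = a / (2 * pi) * Arg (1 + w)"
    and "eps2 a x0 y0 l1 l2 = a / (2 * pi) * Arg (1 + \<i> * w)"
    and "epsp a x0 y0 l1 l2 = a / (2 * pi) * Arg (1 + (1 + \<i>) * w)"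
    and "epsm a x0 y0 l1 l2 = a / (2 * pi) * Arg (1 + (1 - \<i>) * w)"
  using Arg_sl_neighbour[OF assms(1,2), of 1 0] Arg_sl_neighbour[OF assms(1,2), of 0 1]
    Arg_sl_neighbour[OF assms(1,2), of 1 1] Arg_sl_neighbour[OF assms(1,2), of 1 "-1"]
    cmod_1_plus_minus_ii_le
  by (simp_all add: eps1_def eps2_def epsp_def epsm_def w_def Complex_eq)

lemma abs_strains_le:
  assumes "0 < a" "4 * a \<le> cmod (zl a x0 y0 l1 l2)"
  defines "h \<equiv> a / cmod (zl a x0 y0 l1 l2)"
  shows "\<bar>eps1 a x0 y0 l1 l2\<bar> \<le> a * h" "\<bar>eps2 a x0 y0 l1 l2\<bar> \<le> a * h"
    "\<bar>epsp a x0 y0 l1 l2\<bar> \<le> a * h" "\<bar>epsm a x0 y0 l1 l2\<bar> \<le> a * h"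
proof -
  define w where "w = of_real a / zl a x0 y0 l1 l2"
  note h_bounds = zl_scale_bounds[OF assms(1,2), folded h_def]
  have "norm w = h" unfolding w_def h_def using assms(1) by (simp add: norm_divide)
  then have norms: "norm w \<le> 2 * h" "norm (\<i> * w) \<le> 2 * h" "norm ((1 + \<i>) * w) \<le> 2 * h"
      "norm ((1 - \<i>) * w) \<le> 2 * h"
    using cmod_1_plus_minus_ii_le h_bounds(2) by (auto simp: norm_mult intro: mult_right_mono)
  have strain_le: "\<bar>a / (2 * pi) * Arg (1 + v)\<bar> \<le> a * h" if "norm v \<le> 2 * h" for v
    using that h_bounds(3) assms(1) by (intro abs_Arg_scaled_le) auto
  show "\<bar>eps1 a x0 y0 l1 l2\<bar> \<le> a * h" "\<bar>eps2 a x0 y0 l1 l2\<bar> \<le> a * h"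
    "\<bar>epsp a x0 y0 l1 l2\<bar> \<le> a * h" "\<bar>epsm a x0 y0 l1 l2\<bar> \<le> a * h"
    unfolding strains_eq_Arg[OF assms(1,2), folded w_def] using strain_le norms by blast+
qed

lemma eps_sq_sum_approx:
  assumes "0 < a" "4 * a \<le> cmod (zl a x0 y0 l1 l2)"
  defines "h \<equiv> a / cmod (zl a x0 y0 l1 l2)"
  shows "\<bar>(eps1 a x0 y0 l1 l2)\<^sup>2 + (eps2 a x0 y0 l1 l2)\<^sup>2 - a ^ 4 / (4 * pi\<^sup>2 * (cmod (zl a x0 y0 l1 l2))\<^sup>2)\<bar>
       \<le> a\<^sup>2 * h ^ 3 / 2"
proof -
  define w where "w = of_real a / zl a x0 y0 l1 l2"
  define b where "b = a / (2 * pi)"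
  define d1 where "d1 = Arg (1 + w) - Im w"
  define d2 where "d2 = Arg (1 + \<i> * w) - Re w"
  note h_bounds = zl_scale_bounds[OF assms(1,2), folded h_def]
  have norm_w: "norm w = h" unfolding w_def h_def using assms(1) by (simp add: norm_divide)
  have "\<bar>d1\<bar> \<le> 2 * h\<^sup>2" "\<bar>d2\<bar> \<le> 2 * h\<^sup>2"
    using Arg_1_plus_approx[of w] Arg_1_plus_approx[of "\<i> * w"] norm_w h_bounds(3)
    by (simp_all add: d1_def d2_def norm_mult)
  moreover have "(Im w)\<^sup>2 + (Re w)\<^sup>2 = h\<^sup>2" using cmod_power2[of w] unfolding norm_w by linarith
  ultimately have "\<bar>(Im w + d1)\<^sup>2 + (Re w + d2)\<^sup>2 - h\<^sup>2\<bar> \<le> 16 * h ^ 3"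
    using h_bounds by (intro sum_sq_perturbation_le) auto
  moreover have "(eps1 a x0 y0 l1 l2)\<^sup>2 + (eps2 a x0 y0 l1 l2)\<^sup>2
      - a ^ 4 / (4 * pi\<^sup>2 * (cmod (zl a x0 y0 l1 l2))\<^sup>2)
      = b\<^sup>2 * ((Im w + d1)\<^sup>2 + (Re w + d2)\<^sup>2 - h\<^sup>2)"
    unfolding strains_eq_Arg[OF assms(1,2), folded w_def] d1_def d2_def b_def h_def
    using h_bounds(1) by (simp add: power2_eq_square power4_eq_xxxx field_simps)
  ultimately have "\<bar>(eps1 a x0 y0 l1 l2)\<^sup>2 + (eps2 a x0 y0 l1 l2)\<^sup>2
      - a ^ 4 / (4 * pi\<^sup>2 * (cmod (zl a x0 y0 l1 l2))\<^sup>2)\<bar> \<le> b\<^sup>2 * (16 * h ^ 3)"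
    by (simp add: abs_mult mult_left_mono)
  also have "\<dots> \<le> a\<^sup>2 * h ^ 3 / 2"
  proof -
    have "3 * 3 \<le> pi * pi" using pi_gt3 by (intro mult_mono) auto
    then have "8 \<le> pi\<^sup>2" by (simp add: power2_eq_square)
    then have "16 * a\<^sup>2 * h ^ 3 / (4 * pi\<^sup>2) \<le> 16 * a\<^sup>2 * h ^ 3 / 32"
      using h_bounds(2) by (intro divide_left_mono) auto
    then show ?thesis unfolding b_def by (simp add: power_divide)
  qed
  finally show ?thesis .
qed

lemma abs_rem_le:
  assumes "0 < a" "0 \<le> kp" "0 \<le> kd" "4 * a \<le> cmod (zl a x0 y0 l1 l2)"
  shows "\<bar>rem kp kd a x0 y0 l1 l2\<bar> \<le> 41 * (kp + kd) * a\<^sup>2 * (a / cmod (zl a x0 y0 l1 l2)) ^ 3"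
proof -
  define r where "r = cmod (zl a x0 y0 l1 l2)"
  define h where "h = a / r"
  define e1 where "e1 = eps1 a x0 y0 l1 l2"
  define e2 where "e2 = eps2 a x0 y0 l1 l2"
  define ep where "ep = epsp a x0 y0 l1 l2"
  define em where "em = epsm a x0 y0 l1 l2"
  note h_bounds = zl_scale_bounds[OF assms(1,4), folded r_def h_def]
  note strains = abs_strains_le[OF assms(1,4), folded r_def h_def e1_def e2_def ep_def em_def]
    eps_sq_sum_approx[OF assms(1,4), folded r_def h_def e1_def e2_def]
  have "h \<le> 1" using h_bounds(3) by simp
  note springs = spring_terms_le[OF assms(1) h_bounds(2) this]
  define P where "P = (Dax a e1)\<^sup>2 + (Dax a e2)\<^sup>2"
  define Q where "Q = (Dd a ep)\<^sup>2 + (Dd a em)\<^sup>2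
    + ((Ddi_p a e1)\<^sup>2 + (Ddi_m a e1)\<^sup>2 - e1\<^sup>2) + ((Ddi_p a e2)\<^sup>2 + (Ddi_m a e2)\<^sup>2 - e2\<^sup>2)
    + (e1\<^sup>2 + e2\<^sup>2 - a ^ 4 / (4 * pi\<^sup>2 * r\<^sup>2))"
  have rem_eq: "rem kp kd a x0 y0 l1 l2 = kp / 2 * P + kd / 2 * Q"
    unfolding rem_def Fenergy_def Let_def P_def Q_def
    by (simp add: e1_def e2_def ep_def em_def r_def field_simps)
  have "\<bar>P\<bar> \<le> a\<^sup>2 * h ^ 3 / 2"
    unfolding P_def using springs(1)[OF strains(1)] springs(1)[OF strains(2)] by simp
  then have "kp / 2 * \<bar>P\<bar> \<le> kp / 2 * (a\<^sup>2 * h ^ 3 / 2)" using assms(2) by (intro mult_left_mono) auto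
  moreover have "\<bar>Q\<bar> \<le> 81 * a\<^sup>2 * h ^ 3"
    unfolding Q_def using springs(2)[OF strains(3)] springs(2)[OF strains(4)]
      springs(3)[OF strains(1)] springs(3)[OF strains(2)] strains(5)
      zero_le_power2[of "Dd a ep"] zero_le_power2[of "Dd a em"]
    unfolding abs_le_iff by linarith
  then have "kd / 2 * \<bar>Q\<bar> \<le> kd / 2 * (81 * a\<^sup>2 * h ^ 3)" using assms(3) by (intro mult_left_mono) auto
  moreover have "\<bar>kp / 2 * P + kd / 2 * Q\<bar> \<le> kp / 2 * \<bar>P\<bar> + kd / 2 * \<bar>Q\<bar>"
    using abs_triangle_ineq[of "kp / 2 * P" "kd / 2 * Q"] assms(2,3) by (simp add: abs_mult)
  ultimately have "\<bar>kp / 2 * P + kd / 2 * Q\<bar> \<le> kp / 2 * (a\<^sup>2 * h ^ 3 / 2) + kd / 2 * (81 * a\<^sup>2 * h ^ 3)"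
    by linarith
  also have "\<dots> \<le> 41 * (kp + kd) * a\<^sup>2 * h ^ 3"
  proof -
    have "0 \<le> kp * (a\<^sup>2 * h ^ 3)" "0 \<le> kd * (a\<^sup>2 * h ^ 3)" using assms(2,3) h_bounds(2) by simp_all
    then show ?thesis by (simp add: algebra_simps)
  qed
  finally show ?thesis unfolding rem_eq h_def r_def .
qed

lemma abs_rem_scaled_le:
  assumes "0 < a" "0 \<le> kp" "0 \<le> kd" "4 * a \<le> cmod (zl a x0 y0 l1 l2)"
  shows "\<bar>rem kp kd a x0 y0 l1 l2 * (cmod (zl a x0 y0 l1 l2))\<^sup>2 / a\<^sup>2\<bar>
    \<le> 41 * (kp + kd) * a ^ 3 / cmod (zl a x0 y0 l1 l2)"
proof -
  define r where "r = cmod (zl a x0 y0 l1 l2)"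
  have r_pos: "0 < r" unfolding r_def using zl_scale_bounds(1)[OF assms(1,4)] .
  have "\<bar>rem kp kd a x0 y0 l1 l2 * r\<^sup>2 / a\<^sup>2\<bar> = \<bar>rem kp kd a x0 y0 l1 l2\<bar> * (r\<^sup>2 / a\<^sup>2)"
    by (simp add: abs_mult)
  also have "\<dots> \<le> 41 * (kp + kd) * a\<^sup>2 * (a / r) ^ 3 * (r\<^sup>2 / a\<^sup>2)"
    using abs_rem_le[OF assms] unfolding r_def by (intro mult_right_mono) auto
  also have "\<dots> = 41 * (kp + kd) * a ^ 3 / r"
    using r_pos assms(1) by (simp add: power2_eq_square power3_eq_cube field_simps)
  finally show ?thesis unfolding r_def .
qed

lemma cmod_zl_squared: "(cmod (zl a x0 y0 l1 l2))\<^sup>2 = (of_int l1 * a - x0)\<^sup>2 + (of_int l2 * a - y0)\<^sup>2"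
  by (simp add: zl_def complex_norm)

lemma zeta_term_eq:
  assumes "0 < a"
  shows "1 / ((of_int l1 - x0 / a)\<^sup>2 + (of_int l2 - y0 / a)\<^sup>2) = a\<^sup>2 / (cmod (zl a x0 y0 l1 l2))\<^sup>2"
proof -
  have "(cmod (zl a x0 y0 l1 l2))\<^sup>2 = a\<^sup>2 * ((of_int l1 - x0 / a)\<^sup>2 + (of_int l2 - y0 / a)\<^sup>2)"
    unfolding cmod_zl_squared using assms by (simp add: power2_eq_square field_simps)
  then show ?thesis using assms by simp
qed

lemma energy_eq_zeta_plus_rem:
  assumes "0 < a"
  shows "energy kp kd a x0 y0 \<rho> N
    = 1 / (8 * pi\<^sup>2) * kd * a\<^sup>2 * zeta_trunc a x0 y0 \<rho> N
      + (\<Sum>(l1, l2)\<in>annulus a x0 y0 \<rho> N. rem kp kd a x0 y0 l1 l2)"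
proof -
  have "1 / (8 * pi\<^sup>2) * kd * a\<^sup>2 * zeta_trunc a x0 y0 \<rho> N
      = (\<Sum>(l1, l2)\<in>annulus a x0 y0 \<rho> N. kd / (8 * pi\<^sup>2) * a ^ 4 / (cmod (zl a x0 y0 l1 l2))\<^sup>2)"
    unfolding zeta_trunc_def sum_distrib_left zeta_term_eq[OF assms]
    by (intro sum.cong) (auto simp: power2_eq_square power4_eq_xxxx mult_ac)
  then show ?thesis
    unfolding energy_def rem_def by (simp add: sum_subtractf split_def)
qed

theorem theorem5p2:
  fixes a kp kd x0 y0 \<rho> N :: real
  assumes "a > 0" and "kp > 0" and "kd > 0" and "0 < \<rho>" and "\<rho> < N"
  shows "energy kp kd a x0 y0 \<rho> N
           = 1 / (8 * pi\<^sup>2) * kd * a\<^sup>2 * zeta_trunc a x0 y0 \<rho> N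
             + (\<Sum>(l1, l2)\<in>annulus a x0 y0 \<rho> N. rem kp kd a x0 y0 l1 l2)
         \<and> (\<forall>e > 0. \<exists>R. \<forall>l1 l2. R < cmod (zl a x0 y0 l1 l2) \<longrightarrow>
           \<bar>rem kp kd a x0 y0 l1 l2 * (cmod (zl a x0 y0 l1 l2))\<^sup>2 / a\<^sup>2\<bar> < e)"
proof (intro conjI allI impI)
  show "energy kp kd a x0 y0 \<rho> N
           = 1 / (8 * pi\<^sup>2) * kd * a\<^sup>2 * zeta_trunc a x0 y0 \<rho> N
             + (\<Sum>(l1, l2)\<in>annulus a x0 y0 \<rho> N. rem kp kd a x0 y0 l1 l2)"
    using assms(1) by (rule energy_eq_zeta_plus_rem)
next
  fix e :: real
  assume "e > 0"
  define C where "C = 41 * (kp + kd) * a ^ 3"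
  have "\<bar>rem kp kd a x0 y0 l1 l2 * (cmod (zl a x0 y0 l1 l2))\<^sup>2 / a\<^sup>2\<bar> < e"
    if "max (4 * a) (C / e) < cmod (zl a x0 y0 l1 l2)" for l1 l2
  proof -
    have "C / cmod (zl a x0 y0 l1 l2) < e"
      using that \<open>e > 0\<close> assms(1) by (auto simp: divide_less_eq mult.commute)
    then show ?thesis
      using abs_rem_scaled_le[of a kp kd x0 y0 l1 l2] that assms(1-3) unfolding C_def by simp
  qed
  then show "\<exists>R. \<forall>l1 l2. R < cmod (zl a x0 y0 l1 l2) \<longrightarrow>
      \<bar>rem kp kd a x0 y0 l1 l2 * (cmod (zl a x0 y0 l1 l2))\<^sup>2 / a\<^sup>2\<bar> < e"
    by blast
qed

end
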